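(* Let $\mathbf L=(L_1,\ldots,L_K)$ and $\mathbf L'=(L'_1,\ldots,L'_{K'})$ be weakly decreasing sequences of positive integers with $\mathbf L\preccurlyeq\mathbf L'$. If $\mathbf L'\in\mathrm{TFF}(\alpha,N)$, then $\mathbf L\in\mathrm{TFF}(\alpha,N)$.
   Context: Fix a positive integer $N$. A weakly decreasing sequence of positive integers $(L_1,\ldots,L_K)$ belongs to $\mathrm{TFF}(\alpha,N)$ if there exist orthogonal projections $P_1,\ldots,P_K$ on $\mathbb{R}^N$ with $\operatorname{rank}P_i=L_i$ and $\sum_{i=1}^K P_i=\alpha\mathbf I$ (then necessarily $\alpha=\sum L_i/N$). For weakly decreasing sequences of nonnegative integers, $\mathbf L\preccurlyeq\mathbf L'$ (majorization) means $\sum_{i=1}^K L_i=\sum_{i=1}^{K'}L'_i$ and $\sum_{i=1}^k L_i\le\sum_{i=1}^k L'_i$ for all $k\le\min(K,K')$. *)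

theory Defs
  imports "HOL-Analysis.Analysis"
begin

definition orth_proj :: "real^'n^'n \<Rightarrow> bool" where
  "orth_proj P \<longleftrightarrow> transpose P = P \<and> P ** P = P"

text \<open>Membership of the sequence L = (L_1,...,L_K) (as a list) in TFF(alpha, N), N = CARD('n).\<close>
definition TFF :: "real \<Rightarrow> 'n::finite itself \<Rightarrow> nat list \<Rightarrow> bool" where
  "TFF \<alpha> _ L \<longleftrightarrow>
     (\<exists>P :: nat \<Rightarrow> real^'n^'n.
        (\<forall>i < length L. orth_proj (P i) \<and> rank (P i) = L ! i) \<and>
        (\<Sum>i<length L. P i) = \<alpha> *\<^sub>R mat 1)"

definition weakly_decr_pos :: "nat list \<Rightarrow> bool" where
  "weakly_decr_pos L \<longleftrightarrow> sorted_wrt (\<ge>) L \<and> (\<forall>x\<in>set L. 0 < x)"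

definition majorized :: "nat list \<Rightarrow> nat list \<Rightarrow> bool" where
  "majorized L L' \<longleftrightarrow> sum_list L = sum_list L' \<and>
     (\<forall>k \<le> min (length L) (length L'). sum_list (take k L) \<le> sum_list (take k L'))"

end

theory Submission
  imports Defs
begin

text \<open>Padded with zeros to the length of L, the sequence L' is turned into L by finitely
  many transfers of one unit from an entry to a smaller one, each preserving that the
  current sequence majorizes the weakly decreasing L. Such a transfer is realised on the
  projections: if rank Q < rank P there is a unit vector e with P e = e and Q e = 0, and
  subtracting the rank-one projection onto e from P and adding it to Q yields orthogonal
  projections of ranks rank P - 1 and rank Q + 1 with the same sum.\<close>

definition outer :: "real^'n \<Rightarrow> real^'n^'n" where
  "outer e = (\<chi> i j. e$i * e$j)"

lemma outer_mult_vec: "outer e *v x = (e \<bullet> x) *\<^sub>R e"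
  by (simp add: outer_def vec_eq_iff matrix_vector_mult_def inner_vec_def sum_distrib_left mult_ac)

lemma orth_proj_iff:
  "orth_proj P \<longleftrightarrow> (\<forall>x. P *v (P *v x) = P *v x) \<and> (\<forall>x y. (P *v x) \<bullet> y = x \<bullet> (P *v y))"
proof -
  have idem: "P ** P = P \<longleftrightarrow> (\<forall>x. P *v (P *v x) = P *v x)"
    by (simp add: matrix_eq matrix_vector_mul_assoc)
  have "(P *v x) \<bullet> y = x \<bullet> (transpose P *v y)" for x y
    by (metis dot_lmul_matrix vector_transpose_matrix transpose_transpose)
  then have sym: "transpose P = P \<longleftrightarrow> (\<forall>x y. (P *v x) \<bullet> y = x \<bullet> (P *v y))"
    by (metis matrix_eq vector_eq_rdot inner_commute)
  show ?thesis
    unfolding orth_proj_def using idem sym by blast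
qed

lemma orth_proj_range_iff:
  assumes "orth_proj P"
  shows "v \<in> range ((*v) P) \<longleftrightarrow> P *v v = v"
  using assms unfolding orth_proj_iff by (metis rangeE rangeI)

lemma orth_proj_zero: "orth_proj 0"
  by (simp add: orth_proj_def transpose_def vec_eq_iff)

lemma subspace_range_mult_vec: "subspace (range ((*v) (A::real^'n^'m)))"
  by (simp add: linear_subspace_image)

lemma exists_unit_fixed_and_killed:
  fixes P Q :: "real^'n^'n"
  assumes P: "orth_proj P" and rank_less: "rank Q < rank P"
  shows "\<exists>e. P *v e = e \<and> Q *v e = 0 \<and> e \<bullet> e = 1"
proof -
  let ?V = "range ((*v) P)"
  have "\<not> inj_on ((*v) Q) ?V"
  proof
    assume inj: "inj_on ((*v) Q) ?V"
    have "dim ((*v) Q ` ?V) = dim ?V"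
      by (rule dim_image_eq) (auto simp: span_eq_iff[THEN iffD2, OF subspace_range_mult_vec] inj)
    moreover have "dim ((*v) Q ` ?V) \<le> dim (range ((*v) Q))"
      by (rule dim_subset) auto
    ultimately show False
      using rank_less by (simp add: rank_dim_range)
  qed
  then obtain x y where xy: "x \<in> ?V" "y \<in> ?V" "x \<noteq> y" "Q *v x = Q *v y"
    unfolding inj_on_def by blast
  define u where "u = x - y"
  have "u \<noteq> 0" "Q *v u = 0"
    using xy by (simp_all add: u_def matrix_vector_mult_diff_distrib)
  moreover have "P *v u = u"
    using xy subspace_range_mult_vec orth_proj_range_iff[OF P] unfolding u_def
    by (metis subspace_diff)
  ultimately show ?thesis
    by (intro exI[of _ "(1 / norm u) *\<^sub>R u"])
      (simp add: matrix_vector_mult_scaleR inner_commute dot_square_norm power2_eq_square)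
qed

lemma orth_proj_add_outer:
  fixes Q :: "real^'n^'n"
  assumes Q: "orth_proj Q" and Qe: "Q *v e = 0" and unit: "e \<bullet> e = 1"
  shows "orth_proj (Q + outer e)" and "rank (Q + outer e) = rank Q + 1"
proof -
  have Qsym: "(Q *v x) \<bullet> y = x \<bullet> (Q *v y)" and Qidem: "Q *v (Q *v x) = Q *v x" for x y
    using Q by (auto simp: orth_proj_iff)
  have eQ: "e \<bullet> (Q *v x) = 0" for x
    by (metis Qe Qsym inner_zero_left)
  have Q'x: "(Q + outer e) *v x = Q *v x + (e \<bullet> x) *\<^sub>R e" for x
    by (simp add: matrix_vector_mult_add_rdistrib outer_mult_vec)
  show "orth_proj (Q + outer e)"
    unfolding orth_proj_iff Q'x
    by (simp add: matrix_vector_right_distrib matrix_vector_mult_scaleR Qidem Qe eQ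
          inner_add_right unit Qsym inner_add_left inner_commute) (metis Qsym inner_commute)
  let ?U = "range ((*v) Q)"
  have e_notin: "e \<notin> span ?U"
    using eQ unit by (auto simp: span_eq_iff[THEN iffD2, OF subspace_range_mult_vec])
  have "range ((*v) (Q + outer e)) = span (insert e ?U)"
  proof
    show "range ((*v) (Q + outer e)) \<subseteq> span (insert e ?U)"
      unfolding Q'x by (blast intro: span_add span_mul span_base)
    have "e \<in> range ((*v) (Q + outer e))"
      using Qe unit by (auto simp: Q'x intro!: range_eqI[where x = e])
    moreover have "Q *v x \<in> range ((*v) (Q + outer e))" for x
      using eQ Qidem by (auto simp: Q'x intro!: range_eqI[where x = "Q *v x"])
    ultimately show "span (insert e ?U) \<subseteq> range ((*v) (Q + outer e))"
      by (intro span_minimal subspace_range_mult_vec) auto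
  qed
  then show "rank (Q + outer e) = rank Q + 1"
    using e_notin by (simp add: rank_dim_range dim_insert)
qed

lemma orth_proj_diff_outer:
  fixes P :: "real^'n^'n"
  assumes P: "orth_proj P" and Pe: "P *v e = e" and unit: "e \<bullet> e = 1"
  shows "orth_proj (P - outer e)" and "(P - outer e) *v e = 0"
proof -
  have Psym: "(P *v x) \<bullet> y = x \<bullet> (P *v y)" and Pidem: "P *v (P *v x) = P *v x" for x y
    using P by (auto simp: orth_proj_iff)
  have eP: "e \<bullet> (P *v x) = e \<bullet> x" for x
    by (metis Pe Psym)
  have P'x: "(P - outer e) *v x = P *v x - (e \<bullet> x) *\<^sub>R e" for x
    by (simp add: matrix_vector_mult_diff_rdistrib outer_mult_vec)
  show "orth_proj (P - outer e)"
    unfolding orth_proj_iff P'x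
    by (simp add: matrix_vector_mult_diff_distrib matrix_vector_mult_scaleR Pidem Pe eP
          inner_diff_right unit Psym inner_diff_left inner_commute) (metis Psym inner_commute)
  show "(P - outer e) *v e = 0"
    by (simp add: P'x Pe unit)
qed

lemma orth_proj_rank_transfer:
  fixes P Q :: "real^'n^'n"
  assumes P: "orth_proj P" and Q: "orth_proj Q" and rank_less: "rank Q < rank P"
  obtains P' Q' where "orth_proj P'" "orth_proj Q'" "rank P' = rank P - 1"
    "rank Q' = rank Q + 1" "P' + Q' = P + Q"
proof -
  obtain e where Pe: "P *v e = e" and Qe: "Q *v e = 0" and unit: "e \<bullet> e = 1"
    using exists_unit_fixed_and_killed[OF P rank_less] by blast
  have "rank P = rank (P - outer e) + 1"
    using orth_proj_add_outer[OF orth_proj_diff_outer[OF P Pe unit] unit] by simp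
  then show ?thesis
    using that orth_proj_diff_outer(1)[OF P Pe unit] orth_proj_add_outer[OF Q Qe unit]
    by (simp add: algebra_simps)
qed

lemma sum_fun_upd2_eq:
  fixes f :: "'a \<Rightarrow> 'b::comm_monoid_add"
  assumes "finite A" "i \<in> A" "j \<in> A" "i \<noteq> j" "a + b = f i + f j"
  shows "sum (f(i := a, j := b)) A = sum f A"
proof -
  have split: "sum g A = g i + g j + sum g (A - {i} - {j})" for g :: "'a \<Rightarrow> 'b"
    using assms(1-4) sum.remove[of A i g] sum.remove[of "A - {i}" j g] by (simp add: add.assoc)
  show ?thesis
    using assms(4,5) by (subst (1 2) split) (simp add: add.commute)
qed

lemma majorization_transfer_indices:
  fixes xs ys :: "nat list"
  assumes len: "length xs = length ys" and ne: "xs \<noteq> ys"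
    and total: "(\<Sum>m<length ys. xs ! m) = (\<Sum>m<length ys. ys ! m)"
    and dom: "\<forall>k\<le>length ys. (\<Sum>m<k. ys ! m) \<le> (\<Sum>m<k. xs ! m)"
  obtains i j where "i < j" "j < length ys" "ys ! i < xs ! i" "xs ! j < ys ! j"
    "\<forall>m<j. ys ! m \<le> xs ! m"
proof -
  let ?n = "length ys"
  have "\<exists>j<?n. xs ! j < ys ! j"
  proof (rule ccontr)
    assume "\<not> ?thesis"
    then have le: "\<forall>m\<in>{..<?n}. ys ! m \<le> xs ! m" by auto
    from ne len obtain k where "k < ?n" "xs ! k \<noteq> ys ! k" by (auto simp: list_eq_iff_nth_eq)
    with le have "(\<Sum>m<?n. ys ! m) < (\<Sum>m<?n. xs ! m)"
      by (intro sum_strict_mono_ex1) (auto intro!: bexI[of _ k] simp: order_less_le)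
    with total show False by simp
  qed
  define j where "j = (LEAST j. j < ?n \<and> xs ! j < ys ! j)"
  have j: "j < ?n" "xs ! j < ys ! j"
    using LeastI_ex[OF \<open>\<exists>j<?n. xs ! j < ys ! j\<close>] unfolding j_def by auto
  have below: "\<forall>m<j. ys ! m \<le> xs ! m"
  proof (intro allI impI)
    fix m assume "m < j"
    then have "\<not> (m < ?n \<and> xs ! m < ys ! m)"
      unfolding j_def by (rule not_less_Least)
    with \<open>m < j\<close> j(1) show "ys ! m \<le> xs ! m" by simp
  qed
  have "(\<Sum>m<Suc j. ys ! m) \<le> (\<Sum>m<Suc j. xs ! m)"
    using dom Suc_leI[OF j(1)] by blast
  with j(2) have "(\<Sum>m<j. ys ! m) < (\<Sum>m<j. xs ! m)"
    by simp
  then obtain i where "i < j" "ys ! i < xs ! i"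
    using sum_mono[of "{..<j}" "\<lambda>m. xs ! m" "\<lambda>m. ys ! m"] by (meson lessThan_iff not_le)
  with j below that show thesis by blast
qed

lemma majorization_transfer_step:
  fixes xs ys :: "nat list"
  assumes len: "length xs = length ys"
    and total: "(\<Sum>m<length ys. xs ! m) = (\<Sum>m<length ys. ys ! m)"
    and dom: "\<forall>k\<le>length ys. (\<Sum>m<k. ys ! m) \<le> (\<Sum>m<k. xs ! m)"
    and ij: "i < j" "j < length ys" "ys ! i < xs ! i" "\<forall>m<j. ys ! m \<le> xs ! m"
  defines "xs' \<equiv> xs[i := xs ! i - 1, j := xs ! j + 1]"
  shows "(\<Sum>m<length ys. xs' ! m) = (\<Sum>m<length ys. ys ! m)"
    and "\<forall>k\<le>length ys. (\<Sum>m<k. ys ! m) \<le> (\<Sum>m<k. xs' ! m)"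
proof -
  have pointwise: "xs' ! m + (if m = i then 1 else 0) = xs ! m + (if m = j then 1 else 0)" for m
    using ij len by (auto simp: xs'_def nth_list_update)
  then have "(\<Sum>m<k. xs' ! m + (if m = i then 1 else 0)) = (\<Sum>m<k. xs ! m + (if m = j then 1 else 0))" for k
    by (simp only: pointwise)
  then have prefix: "(\<Sum>m<k. xs' ! m) + (if i < k then 1 else 0) = (\<Sum>m<k. xs ! m) + (if j < k then 1 else 0)" for k
    by (simp add: sum.distrib)
  show "(\<Sum>m<length ys. xs' ! m) = (\<Sum>m<length ys. ys ! m)"
    using prefix[of "length ys"] ij total by simp
  show "\<forall>k\<le>length ys. (\<Sum>m<k. ys ! m) \<le> (\<Sum>m<k. xs' ! m)"
  proof (intro allI impI)
    fix k assume k: "k \<le> length ys"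
    show "(\<Sum>m<k. ys ! m) \<le> (\<Sum>m<k. xs' ! m)"
    proof (cases "i < k \<and> k \<le> j")
      case True
      have "(\<Sum>m<k. ys ! m + (if m = i then 1 else 0)) \<le> (\<Sum>m<k. xs ! m)"
        using True ij by (intro sum_mono) auto
      then show ?thesis
        using prefix[of k] True by (simp add: sum.distrib)
    next
      case False
      then have "(\<Sum>m<k. xs' ! m) = (\<Sum>m<k. xs ! m)"
        using prefix[of k] ij(1) by (cases "i < k") auto
      then show ?thesis
        using dom k by simp
    qed
  qed
qed

text \<open>Each transfer strictly decreases the L1 distance between xs and ys.\<close>
lemma transfer_closed_majorized:
  fixes xs ys :: "nat list"
  assumes S_transfer: "\<And>zs i j. S zs \<Longrightarrow> i < length zs \<Longrightarrow> j < length zs \<Longrightarrow> zs ! j < zs ! i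
      \<Longrightarrow> S (zs[i := zs ! i - 1, j := zs ! j + 1])"
    and decr: "sorted_wrt (\<ge>) ys" and len: "length xs = length ys"
    and maj: "majorized ys xs" and "S xs"
  shows "S ys"
proof -
  have sum_take: "sum_list (take k zs) = (\<Sum>m<k. zs ! m)" if "k \<le> length zs" for k and zs :: "nat list"
    using that by (simp add: sum_list_sum_nth atLeast0LessThan min_def)
  have total: "(\<Sum>m<length ys. xs ! m) = (\<Sum>m<length ys. ys ! m)"
    and dom: "\<forall>k\<le>length ys. (\<Sum>m<k. ys ! m) \<le> (\<Sum>m<k. xs ! m)"
    using maj len sum_take[of "length ys" ys] sum_take[of "length xs" xs]
    by (auto simp: majorized_def sum_take)
  show ?thesis
    using len total dom \<open>S xs\<close>
  proof (induction "\<Sum>m<length ys. (xs ! m - ys ! m) + (ys ! m - xs ! m)" arbitrary: xs rule: less_induct)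
    case less
    show ?case
    proof (cases "xs = ys")
      case True
      with less.prems show ?thesis by simp
    next
      case False
      then obtain i j where ij: "i < j" "j < length ys" "ys ! i < xs ! i" "xs ! j < ys ! j"
        "\<forall>m<j. ys ! m \<le> xs ! m"
        using majorization_transfer_indices less.prems(1-3) by metis
      define xs' where "xs' = xs[i := xs ! i - 1, j := xs ! j + 1]"
      have "xs ! j < xs ! i"
        using ij sorted_wrt_nth_less[OF decr, of i j] by linarith
      then have "S xs'"
        unfolding xs'_def using S_transfer less.prems(1,4) ij by simp
      moreover have "(\<Sum>m<length ys. (xs' ! m - ys ! m) + (ys ! m - xs' ! m))
          < (\<Sum>m<length ys. (xs ! m - ys ! m) + (ys ! m - xs ! m))"
        using ij less.prems(1)
        by (intro sum_strict_mono_ex1) (auto simp: xs'_def nth_list_update intro!: bexI[of _ i])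
      ultimately show ?thesis
        using less.hyps less.prems(1) majorization_transfer_step[OF less.prems(1-3) ij(1,2,3,5)]
        unfolding xs'_def by simp
    qed
  qed
qed

lemma majorized_length_le:
  assumes pos: "\<forall>x\<in>set L'. 0 < x" and maj: "majorized L L'"
  shows "length L' \<le> length L"
proof (rule ccontr)
  let ?n = "length L"
  assume "\<not> length L' \<le> ?n"
  then have "drop ?n L' = L' ! ?n # drop (Suc ?n) L'" and "0 < L' ! ?n"
    using pos by (simp_all add: Cons_nth_drop_Suc)
  then have "0 < sum_list (drop ?n L')"
    by simp
  have "sum_list L \<le> sum_list (take ?n L')"
    using maj \<open>\<not> length L' \<le> ?n\<close> by (auto simp: majorized_def)
  also have "\<dots> < sum_list (take ?n L') + sum_list (drop ?n L')"
    using \<open>0 < sum_list (drop ?n L')\<close> by simp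
  also have "\<dots> = sum_list L'"
    by (simp flip: sum_list_append)
  finally show False
    using maj by (simp add: majorized_def)
qed

lemma majorized_append_zeros:
  assumes maj: "majorized L L'" and len: "length L' \<le> length L"
  shows "majorized L (L' @ replicate (length L - length L') 0)"
  unfolding majorized_def
proof (intro conjI allI impI)
  show "sum_list L = sum_list (L' @ replicate (length L - length L') 0)"
    using maj by (simp add: majorized_def)
  fix k assume "k \<le> min (length L) (length (L' @ replicate (length L - length L') 0))"
  show "sum_list (take k L) \<le> sum_list (take k (L' @ replicate (length L - length L') 0))"
  proof (cases "k \<le> length L'")
    case True
    with maj len show ?thesis by (simp add: majorized_def)
  next
    case False
    have "sum_list (take k L) \<le> sum_list L"
      by (metis append_take_drop_id sum_list_append le_add1)
    with maj False show ?thesis by (simp add: majorized_def)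
  qed
qed

lemma TFF_transfer:
  assumes "TFF \<alpha> (T :: 'n::finite itself) L" "i < length L" "j < length L" "L ! j < L ! i"
  shows "TFF \<alpha> T (L[i := L ! i - 1, j := L ! j + 1])"
proof -
  obtain P :: "nat \<Rightarrow> real^'n^'n" where P: "\<forall>k<length L. orth_proj (P k) \<and> rank (P k) = L ! k"
    and sum_P: "(\<Sum>k<length L. P k) = \<alpha> *\<^sub>R mat 1"
    using assms(1) unfolding TFF_def by blast
  have "i \<noteq> j"
    using assms(4) by auto
  obtain A B where AB: "orth_proj A" "orth_proj B" "rank A = L ! i - 1" "rank B = L ! j + 1"
    "A + B = P i + P j"
    using orth_proj_rank_transfer[of "P i" "P j"] P assms(2-4) by metis
  have "(\<Sum>k<length L. (P(i := A, j := B)) k) = \<alpha> *\<^sub>R mat 1"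
    using sum_fun_upd2_eq[of "{..<length L}" i j A B P] assms(2,3) \<open>i \<noteq> j\<close> AB(5) sum_P by simp
  moreover have "\<forall>k<length L. orth_proj ((P(i := A, j := B)) k)
      \<and> rank ((P(i := A, j := B)) k) = L[i := L ! i - 1, j := L ! j + 1] ! k"
    using P AB \<open>i \<noteq> j\<close> assms(2,3) by (auto simp: nth_list_update)
  ultimately show ?thesis
    unfolding TFF_def by (metis length_list_update)
qed

lemma TFF_append_zeros:
  assumes "TFF \<alpha> (T :: 'n::finite itself) L"
  shows "TFF \<alpha> T (L @ replicate m 0)"
proof -
  obtain P :: "nat \<Rightarrow> real^'n^'n" where P: "\<forall>k<length L. orth_proj (P k) \<and> rank (P k) = L ! k"
    and sum_P: "(\<Sum>k<length L. P k) = \<alpha> *\<^sub>R mat 1"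
    using assms unfolding TFF_def by blast
  define P' where "P' k = (if k < length L then P k else 0)" for k
  have "(\<Sum>k<length L + m. P' k) = (\<Sum>k<length L. P k)"
    by (subst sum.mono_neutral_right[of "{..<length L + m}" "{..<length L}"]) (auto simp: P'_def)
  moreover have "\<forall>k<length L + m. orth_proj (P' k) \<and> rank (P' k) = (L @ replicate m 0) ! k"
    using P by (auto simp: P'_def nth_append orth_proj_zero)
  ultimately show ?thesis
    unfolding TFF_def using sum_P by (intro exI[of _ P']) simp
qed

theorem theorem2p3:
  fixes L L' :: "nat list" and \<alpha> :: real
  assumes "weakly_decr_pos L" and "weakly_decr_pos L'"
    and "majorized L L'"
    and "TFF \<alpha> TYPE('n::finite) L'"
  shows "TFF \<alpha> TYPE('n) L"
proof -
  have len: "length L' \<le> length L"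
    using assms(2,3) majorized_length_le by (auto simp: weakly_decr_pos_def)
  let ?L'' = "L' @ replicate (length L - length L') 0"
  have "TFF \<alpha> TYPE('n) ?L''"
    using assms(4) by (rule TFF_append_zeros)
  moreover have "majorized L ?L''"
    using assms(3) len by (rule majorized_append_zeros)
  moreover have "sorted_wrt (\<ge>) L"
    using assms(1) by (simp add: weakly_decr_pos_def)
  ultimately show ?thesis
    using transfer_closed_majorized[where S = "TFF \<alpha> TYPE('n)" and xs = ?L'' and ys = L,
        OF TFF_transfer] len by simp
qed

end
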